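(* For every elementary pair $(p,q)$ of partial isomorphisms of $\mathbb{Q}$ there is a triple $(p',q',w)$ that liberates $p$ in $(p,q)$, and there is a triple that liberates $q$ in $(p,q)$.
   Context: A partial isomorphism of $\mathbb{Q}$ is an order-preserving bijection $p$ between finite subsets $\mathrm{dom}(p),\mathrm{ran}(p)$ of $\mathbb{Q}$; $p'\supseteq p$ means $p'$ extends $p$; $\mathrm{Fix}(p)=\{c\in\mathrm{dom}(p):p(c)=c\}$. An open interval $(a,b)$ is $p$-increasing if $a,b\in\mathrm{dom}(p)$, $p(a)=a$, $p(b)=b$ and $p(c)>c$ for all $c\in\mathrm{dom}(p)\cap(a,b)$; $p$-decreasing likewise with $p(c)<c$; $p$-monotone means either. Writing $\mathrm{dom}(p)=\{a_0<\dots<a_n\}$, $p$ is informative if $p(a_0)=a_0$, $p(a_n)=a_n$ and there are indices $0=i_0<\dots<i_r=n$ with $p(a_{i_k})=a_{i_k}$ and each $(a_{i_k},a_{i_{k+1}})$ $p$-monotone; then $\mathrm{Ess}(p)=(\mathrm{dom}(p)\cup\mathrm{ran}(p))\setminus\{a_0,a_n\}$. A pair $(p,q)$ is elementary if $p,q$ are informative, $\min\mathrm{dom}(p)=\min\mathrm{dom}(q)$, $\max\mathrm{dom}(p)=\max\mathrm{dom}(q)$, and $\mathrm{Fix}(p)\cap\mathrm{Fix}(q)$ consists only of this min and max. Words: $F(s,t)$ free group; for reduced $w=t^{n_k}s^{m_k}\cdots t^{n_1}s^{m_1}$, $w(p,q)(c)=q^{n_k}p^{m_k}\cdots q^{n_1}p^{m_1}(c)$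 when defined (rightmost letter acts first); "$w=t^nv$" means the product is reduced. Liberation: for an elementary pair $(p,q)$, a triple $(p',q',w)$ with $p'\supseteq p$, $q'\supseteq q$ partial isomorphisms and $w$ reduced liberates $p$ in $(p,q)$ if: (i) $p',q'$ are informative; (ii) $\min\mathrm{dom}(p')=\min\mathrm{dom}(p)$, $\min\mathrm{dom}(q')=\min\mathrm{dom}(q)$, $\max\mathrm{dom}(p')=\max\mathrm{dom}(p)$, $\max\mathrm{dom}(q')=\max\mathrm{dom}(q)$; (iii) $w=t^nv$ with $n\neq0$; (iv) $w(p',q')(c)$ is defined for all $c\in\mathrm{Ess}(p)\cup\mathrm{Ess}(q)$ and $w(p',q')(\min(\mathrm{Ess}(p)\cup\mathrm{Ess}(q)))>\max\mathrm{Ess}(p')$; (v) there is an open interval $J$ whose right endpoint is $\max\mathrm{dom}(q)$, with $w(p',q')(c)\in J$ for all $c\in\mathrm{Ess}(p)\cup\mathrm{Ess}(q)$, and $J$ is $q'$-increasing if $n>0$ and $q'$-decreasing if $n<0$. The triple liberates $q$ in $(p,q)$ if the same holds with the roles of $p,q$ and of $s,t$ interchanged (so $w=s^nv$, $n\ne0$, the bound in (iv) is $>\max\mathrm{Ess}(q')$, and $J$ has right endpoint $\max\mathrm{dom}(p)$ and is $p'$-increasing/decreasing according to the sign of $n$). *)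

theory Defs
  imports Main "HOL.Rat"
begin

definition partial_iso :: "(rat \<rightharpoonup> rat) \<Rightarrow> bool" where
  "partial_iso p \<longleftrightarrow> finite (dom p) \<and>
     (\<forall>x\<in>dom p. \<forall>y\<in>dom p. x < y \<longrightarrow> the (p x) < the (p y))"

definition Fix :: "(rat \<rightharpoonup> rat) \<Rightarrow> rat set" where
  "Fix p = {c \<in> dom p. p c = Some c}"

definition increasing_interval :: "(rat \<rightharpoonup> rat) \<Rightarrow> rat \<Rightarrow> rat \<Rightarrow> bool" where
  "increasing_interval p a b \<longleftrightarrow> p a = Some a \<and> p b = Some b \<and>
     (\<forall>c \<in> dom p \<inter> {a<..<b}. the (p c) > c)"

definition decreasing_interval :: "(rat \<rightharpoonup> rat) \<Rightarrow> rat \<Rightarrow> rat \<Rightarrow> bool" where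
  "decreasing_interval p a b \<longleftrightarrow> p a = Some a \<and> p b = Some b \<and>
     (\<forall>c \<in> dom p \<inter> {a<..<b}. the (p c) < c)"

definition monotone_interval :: "(rat \<rightharpoonup> rat) \<Rightarrow> rat \<Rightarrow> rat \<Rightarrow> bool" where
  "monotone_interval p a b \<longleftrightarrow> increasing_interval p a b \<or> decreasing_interval p a b"

text \<open>Informative: the list xs plays the role of a_{i_0} < ... < a_{i_r}.\<close>
definition informative :: "(rat \<rightharpoonup> rat) \<Rightarrow> bool" where
  "informative p \<longleftrightarrow> dom p \<noteq> {} \<and>
     p (Min (dom p)) = Some (Min (dom p)) \<and> p (Max (dom p)) = Some (Max (dom p)) \<and>
     (\<exists>xs. xs \<noteq> [] \<and> sorted_wrt (<) xs \<and> hd xs = Min (dom p) \<and> last xs = Max (dom p) \<and>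
        (\<forall>x \<in> set xs. p x = Some x) \<and>
        (\<forall>i. i + 1 < length xs \<longrightarrow> monotone_interval p (xs ! i) (xs ! (i + 1))))"

definition Ess :: "(rat \<rightharpoonup> rat) \<Rightarrow> rat set" where
  "Ess p = (dom p \<union> ran p) - {Min (dom p), Max (dom p)}"

definition elementary_pair :: "(rat \<rightharpoonup> rat) \<Rightarrow> (rat \<rightharpoonup> rat) \<Rightarrow> bool" where
  "elementary_pair p q \<longleftrightarrow> partial_iso p \<and> partial_iso q \<and>
     informative p \<and> informative q \<and>
     Min (dom p) = Min (dom q) \<and> Max (dom p) = Max (dom q) \<and>
     Fix p \<inter> Fix q = {Min (dom p), Max (dom p)}"

datatype gen = S | T

text \<open>A word is a list of letters (generator, sign); True = positive exponent.
  The head of the list is the leftmost letter (which acts last).\<close>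
type_synonym word = "(gen \<times> bool) list"

definition reduced :: "word \<Rightarrow> bool" where
  "reduced w \<longleftrightarrow> (\<forall>i. i + 1 < length w \<longrightarrow>
      \<not> (fst (w ! i) = fst (w ! (i + 1)) \<and> snd (w ! i) \<noteq> snd (w ! (i + 1))))"

definition inv_pm :: "(rat \<rightharpoonup> rat) \<Rightarrow> (rat \<rightharpoonup> rat)" where
  "inv_pm p y = (if y \<in> ran p then Some (THE x. p x = Some y) else None)"

fun act :: "(rat \<rightharpoonup> rat) \<Rightarrow> (rat \<rightharpoonup> rat) \<Rightarrow> gen \<times> bool \<Rightarrow> (rat \<rightharpoonup> rat)" where
  "act p q (S, True) = p"
| "act p q (S, False) = inv_pm p"
| "act p q (T, True) = q"
| "act p q (T, False) = inv_pm q"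

text \<open>word_eval p q w c = w(p,q)(c): the rightmost letter acts first; None = undefined.\<close>
fun word_eval :: "(rat \<rightharpoonup> rat) \<Rightarrow> (rat \<rightharpoonup> rat) \<Rightarrow> word \<Rightarrow> rat \<rightharpoonup> rat" where
  "word_eval p q [] c = Some c"
| "word_eval p q (l # w) c = (case word_eval p q w c of None \<Rightarrow> None | Some d \<Rightarrow> act p q l d)"

definition liberates_p ::
  "(rat \<rightharpoonup> rat) \<Rightarrow> (rat \<rightharpoonup> rat) \<Rightarrow> (rat \<rightharpoonup> rat) \<Rightarrow> (rat \<rightharpoonup> rat) \<Rightarrow> word \<Rightarrow> bool" where
  "liberates_p p q p' q' w \<longleftrightarrow>
     partial_iso p' \<and> partial_iso q' \<and> p \<subseteq>\<^sub>m p' \<and> q \<subseteq>\<^sub>m q' \<and> reduced w \<and>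
     informative p' \<and> informative q' \<and>
     Min (dom p') = Min (dom p) \<and> Min (dom q') = Min (dom q) \<and>
     Max (dom p') = Max (dom p) \<and> Max (dom q') = Max (dom q) \<and>
     w \<noteq> [] \<and> fst (hd w) = T \<and>
     (\<forall>c \<in> Ess p \<union> Ess q. word_eval p' q' w c \<noteq> None) \<and>
     (Ess p \<union> Ess q \<noteq> {} \<longrightarrow>
        (\<forall>e \<in> Ess p'. the (word_eval p' q' w (Min (Ess p \<union> Ess q))) > e)) \<and>
     (\<exists>a. (\<forall>c \<in> Ess p \<union> Ess q. the (word_eval p' q' w c) \<in> {a<..<Max (dom q)}) \<and>
          (if snd (hd w) then increasing_interval q' a (Max (dom q))
           else decreasing_interval q' a (Max (dom q))))"

definition liberates_q ::
  "(rat \<rightharpoonup> rat) \<Rightarrow> (rat \<rightharpoonup> rat) \<Rightarrow> (rat \<rightharpoonup> rat) \<Rightarrow> (rat \<rightharpoonup> rat) \<Rightarrow> word \<Rightarrow> bool" where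
  "liberates_q p q p' q' w \<longleftrightarrow>
     partial_iso p' \<and> partial_iso q' \<and> p \<subseteq>\<^sub>m p' \<and> q \<subseteq>\<^sub>m q' \<and> reduced w \<and>
     informative p' \<and> informative q' \<and>
     Min (dom p') = Min (dom p) \<and> Min (dom q') = Min (dom q) \<and>
     Max (dom p') = Max (dom p) \<and> Max (dom q') = Max (dom q) \<and>
     w \<noteq> [] \<and> fst (hd w) = S \<and>
     (\<forall>c \<in> Ess p \<union> Ess q. word_eval p' q' w c \<noteq> None) \<and>
     (Ess p \<union> Ess q \<noteq> {} \<longrightarrow>
        (\<forall>e \<in> Ess q'. the (word_eval p' q' w (Min (Ess p \<union> Ess q))) > e)) \<and>
     (\<exists>a. (\<forall>c \<in> Ess p \<union> Ess q. the (word_eval p' q' w c) \<in> {a<..<Max (dom p)}) \<and>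
          (if snd (hd w) then increasing_interval p' a (Max (dom p))
           else decreasing_interval p' a (Max (dom p))))"

end

theory Submission
  imports Defs
begin

(* Informativeness is recast as the existence of a frame: a strictly increasing list of fixed
   points from Min dom to Max dom whose gaps are each increasing or decreasing. Frames survive
   extension, and a new point of a gap may be sent anywhere in a window compatible with the
   order and the direction of the gap (framed_extend). Hence a point of a gap can always be
   moved up inside the gap by the letter, or inverse letter, of that gap (advance).

   For an elementary pair the frames of p and q share only their ends m < M. Starting from
   e0 = Min (Ess p Un Ess q), the orbit point is moved up, using p or q, until it enters the
   last gap (a, M) of q (climb; it terminates by counting the points above the current one).
   Then the climbing word v is made defined on all essential points, and the point is pushed
   with powers of the letter of the last gap beyond every point of p (push), extending q only.
   Every letter moves the point up, so the word is reduced (ascending_reduced). *)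

lemma partial_iso_less:
  "partial_iso r \<Longrightarrow> r x = Some a \<Longrightarrow> r y = Some b \<Longrightarrow> x < y \<Longrightarrow> a < b"
  unfolding partial_iso_def by (metis domI option.sel)

lemma partial_iso_le:
  "partial_iso r \<Longrightarrow> r x = Some a \<Longrightarrow> r y = Some b \<Longrightarrow> x \<le> y \<Longrightarrow> a \<le> b"
  using partial_iso_less by (metis order.order_iff_strict option.inject)

lemma partial_iso_less_rev:
  "partial_iso r \<Longrightarrow> r x = Some a \<Longrightarrow> r y = Some b \<Longrightarrow> a < b \<Longrightarrow> x < y"
  using partial_iso_le by (meson not_le)

lemma partial_iso_inj: "partial_iso r \<Longrightarrow> r x = Some a \<Longrightarrow> r y = Some a \<Longrightarrow> x = y"
  using partial_iso_less by (metis less_irrefl linorder_neqE)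

lemma finite_ran_partial_iso: "partial_iso r \<Longrightarrow> finite (ran r)"
  unfolding partial_iso_def by (simp add: finite_ran)

lemma inv_pm_Some_iff: "partial_iso r \<Longrightarrow> inv_pm r y = Some x \<longleftrightarrow> r x = Some y"
proof
  assume pi: "partial_iso r"
  show "r x = Some y" if "inv_pm r y = Some x"
  proof -
    from that have y: "y \<in> ran r" and x: "x = (THE x. r x = Some y)"
      unfolding inv_pm_def by (auto split: if_splits)
    from y obtain x0 where x0: "r x0 = Some y" by (auto simp: ran_def)
    have "(THE x. r x = Some y) = x0" using x0 partial_iso_inj[OF pi] by blast
    then show ?thesis using x x0 by simp
  qed
  show "inv_pm r y = Some x" if "r x = Some y"
  proof -
    have "(THE x. r x = Some y) = x" using that partial_iso_inj[OF pi] by blast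
    then show ?thesis using that unfolding inv_pm_def by (auto simp: ran_def)
  qed
qed

lemma dom_inv_pm: "dom (inv_pm r) = ran r"
  unfolding inv_pm_def dom_def by auto

lemma ran_inv_pm: "partial_iso r \<Longrightarrow> ran (inv_pm r) = dom r"
  by (auto simp: ran_def inv_pm_Some_iff)

lemma partial_iso_inv_pm: "partial_iso r \<Longrightarrow> partial_iso (inv_pm r)"
  unfolding partial_iso_def[of "inv_pm r"]
proof (intro conjI ballI impI)
  assume pi: "partial_iso r"
  show "finite (dom (inv_pm r))" using finite_ran_partial_iso[OF pi] by (simp add: dom_inv_pm)
  fix x y assume "x \<in> dom (inv_pm r)" "y \<in> dom (inv_pm r)" and xy: "x < y"
  then obtain a b where a: "inv_pm r x = Some a" and b: "inv_pm r y = Some b" by auto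
  then have "r a = Some x" "r b = Some y" using inv_pm_Some_iff[OF pi] by auto
  then have "a < b" using partial_iso_less_rev[OF pi] xy by blast
  then show "the (inv_pm r x) < the (inv_pm r y)" using a b by simp
qed

lemma inv_pm_inv_pm: "partial_iso r \<Longrightarrow> inv_pm (inv_pm r) = r"
proof
  fix x assume pi: "partial_iso r"
  note inv1 = inv_pm_Some_iff[OF pi] and inv2 = inv_pm_Some_iff[OF partial_iso_inv_pm[OF pi]]
  show "inv_pm (inv_pm r) x = r x"
  proof (cases "r x")
    case None
    then show ?thesis using inv1 inv2 by (metis not_None_eq)
  qed (use inv1 inv2 in simp)
qed

lemma inv_pm_mono:
  assumes "r \<subseteq>\<^sub>m r'" "partial_iso r" "partial_iso r'"
  shows "inv_pm r \<subseteq>\<^sub>m inv_pm r'"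
  unfolding map_le_def
proof
  fix y assume "y \<in> dom (inv_pm r)"
  then obtain x where x: "inv_pm r y = Some x" by auto
  then have "r x = Some y" using inv_pm_Some_iff[OF assms(2)] by simp
  then have "r' x = Some y" using assms(1) by (metis domI map_le_def)
  then show "inv_pm r y = inv_pm r' y" using x inv_pm_Some_iff[OF assms(3)] by metis
qed

lemma sorted_hd_le: "sorted_wrt (<) xs \<Longrightarrow> x \<in> set xs \<Longrightarrow> hd xs \<le> (x::'a::linorder)"
  by (induction xs) auto

lemma sorted_le_last: "sorted_wrt (<) xs \<Longrightarrow> x \<in> set xs \<Longrightarrow> x \<le> last (xs::'a::linorder list)"
  by (induction xs) (auto simp: less_imp_le)

lemma sorted_nth_bounds:
  "sorted_wrt (<) xs \<Longrightarrow> k < length xs \<Longrightarrow> hd xs \<le> xs!k \<and> xs!k \<le> (last xs::'a::linorder)"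
  using sorted_hd_le sorted_le_last nth_mem by blast

lemma sorted_nth_less: "sorted_wrt (<) xs \<Longrightarrow> i < j \<Longrightarrow> j < length xs \<Longrightarrow> xs!i < (xs!j::'a::linorder)"
  by (simp add: sorted_wrt_iff_nth_less)

lemma sorted_find_gap:
  fixes v :: "'a::linorder"
  assumes "xs \<noteq> []" "sorted_wrt (<) xs" "hd xs < v" "v < last xs" "v \<notin> set xs"
  shows "\<exists>i. i + 1 < length xs \<and> xs!i < v \<and> v < xs!(i+1)"
  using assms
proof (induction xs)
  case (Cons x xs)
  show ?case
  proof (cases "xs = []")
    case False
    show ?thesis
    proof (cases "v < hd xs")
      case True
      then show ?thesis using False Cons.prems by (intro exI[of _ 0]) (auto simp: hd_conv_nth)
    next
      case notfirst: False
      have "v \<noteq> hd xs" using False Cons.prems by auto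
      then have "hd xs < v" using notfirst by (meson linorder_neqE)
      then obtain i where "i + 1 < length xs \<and> xs!i < v \<and> v < xs!(i+1)"
        using Cons.IH Cons.prems False by auto
      then show ?thesis by (intro exI[of _ "Suc i"]) auto
    qed
  qed (use Cons.prems in simp)
qed simp

lemma sorted_gap_unique:
  fixes xs :: "'a::linorder list"
  assumes "sorted_wrt (<) xs" "i + 1 < length xs" "j + 1 < length xs"
    "xs!i < v" "v < xs!(i+1)" "xs!j < v" "v < xs!(j+1)"
  shows "i = j"
proof (rule ccontr)
  assume "i \<noteq> j"
  then consider "j + 1 \<le> i" | "i + 1 \<le> j" by linarith
  then show False
    by cases (use assms sorted_nth_less[OF assms(1)] in \<open>fastforce simp: le_less\<close>)+
qed

section \<open>Frames of informative partial isomorphisms\<close>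

text \<open>Informative partial isomorphisms are exactly the framed ones; frames
  are the working form of informativeness, because extensions of r keep the same frame.\<close>

definition framed :: "(rat \<rightharpoonup> rat) \<Rightarrow> rat list \<Rightarrow> (nat \<Rightarrow> bool) \<Rightarrow> bool" where
  "framed r xs d \<longleftrightarrow> partial_iso r \<and> sorted_wrt (<) xs \<and> xs \<noteq> [] \<and>
     dom r \<subseteq> {hd xs..last xs} \<and> (\<forall>x\<in>set xs. r x = Some x) \<and>
     (\<forall>i. i + 1 < length xs \<longrightarrow> (if d i then increasing_interval r (xs!i) (xs!(i+1))
                                   else decreasing_interval r (xs!i) (xs!(i+1))))"

lemma framed_partial_iso: "framed r xs d \<Longrightarrow> partial_iso r"
  by (simp add: framed_def)

lemma framed_fix: "framed r xs d \<Longrightarrow> x \<in> set xs \<Longrightarrow> r x = Some x"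
  by (simp add: framed_def)

lemma framed_ends: "framed r xs d \<Longrightarrow> r (hd xs) = Some (hd xs) \<and> r (last xs) = Some (last xs)"
  by (simp add: framed_def)

lemma framed_gap:
  "framed r xs d \<Longrightarrow> i + 1 < length xs \<Longrightarrow>
     if d i then increasing_interval r (xs!i) (xs!(i+1)) else decreasing_interval r (xs!i) (xs!(i+1))"
  unfolding framed_def by blast

lemma framed_dom: "framed r xs d \<Longrightarrow> x \<in> dom r \<Longrightarrow> hd xs \<le> x \<and> x \<le> last xs"
  unfolding framed_def by auto

lemma framed_ran: "framed r xs d \<Longrightarrow> r x = Some y \<Longrightarrow> hd xs \<le> y \<and> y \<le> last xs"
  using framed_dom partial_iso_le[OF framed_partial_iso] framed_ends by (metis domI)

lemma framed_open:
  "framed r xs d \<Longrightarrow> r x = Some y \<Longrightarrow> hd xs < x \<Longrightarrow> x < last xs \<Longrightarrow> hd xs < y \<and> y < last xs"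
  using partial_iso_less[OF framed_partial_iso] framed_ends by blast

lemma framed_Min: "framed r xs d \<Longrightarrow> Min (dom r) = hd xs"
  using framed_dom framed_ends framed_partial_iso unfolding partial_iso_def
  by (metis Min_eqI domI)

lemma framed_Max: "framed r xs d \<Longrightarrow> Max (dom r) = last xs"
  using framed_dom framed_ends framed_partial_iso unfolding partial_iso_def
  by (metis Max_eqI domI)

lemma Ess_framed: "framed r xs d \<Longrightarrow> Ess r \<subseteq> {hd xs<..<last xs}"
  unfolding Ess_def framed_Min framed_Max
  by (auto dest: framed_dom framed_ran simp: ran_def le_less)

lemma framed_informative: "framed r xs d \<Longrightarrow> informative r"
  unfolding informative_def framed_Min framed_Max
  by (intro conjI exI[of _ xs]) (auto simp: framed_def monotone_interval_def split: if_splits)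

lemma informative_framed:
  assumes "informative r" "partial_iso r"
  shows "\<exists>xs d. framed r xs d \<and> hd xs = Min (dom r) \<and> last xs = Max (dom r)"
proof -
  from assms(1) obtain xs where xs: "xs \<noteq> []" "sorted_wrt (<) xs" "hd xs = Min (dom r)"
    "last xs = Max (dom r)" "\<forall>x \<in> set xs. r x = Some x"
    "\<forall>i. i + 1 < length xs \<longrightarrow> monotone_interval r (xs ! i) (xs ! (i + 1))"
    unfolding informative_def by blast
  have "finite (dom r)" using assms(2) unfolding partial_iso_def by simp
  then have "\<forall>x\<in>dom r. Min (dom r) \<le> x \<and> x \<le> Max (dom r)" by simp
  then have "dom r \<subseteq> {hd xs..last xs}" using xs(3,4) by auto
  then have "framed r xs (\<lambda>i. increasing_interval r (xs!i) (xs!(i+1)))"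
    using xs assms(2) unfolding framed_def monotone_interval_def by auto
  then show ?thesis using xs by blast
qed

lemma inv_pm_in_gap:
  assumes pi: "partial_iso r" and ends: "r a = Some a" "r b = Some b"
    and c: "inv_pm r c = Some x" "a < c" "c < b"
  shows "r x = Some c \<and> x \<in> dom r \<inter> {a<..<b}"
proof -
  have rx: "r x = Some c" using c(1) inv_pm_Some_iff[OF pi] by simp
  then have "a < x" "x < b" using partial_iso_less_rev[OF pi] ends c(2,3) by blast+
  then show ?thesis using rx by auto
qed

lemma increasing_inv_pm:
  assumes pi: "partial_iso r" and inc: "increasing_interval r a b"
  shows "decreasing_interval (inv_pm r) a b"
proof -
  have ends: "r a = Some a" "r b = Some b" using inc unfolding increasing_interval_def by auto
  have "the (inv_pm r c) < c" if "c \<in> dom (inv_pm r) \<inter> {a<..<b}" for c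
  proof -
    from that obtain x where x: "inv_pm r c = Some x" "a < c" "c < b" by auto
    with inv_pm_in_gap[OF pi ends] have "r x = Some c" "x \<in> dom r \<inter> {a<..<b}" by auto
    then show ?thesis using inc x(1) unfolding increasing_interval_def by force
  qed
  then show ?thesis using ends inv_pm_Some_iff[OF pi] unfolding decreasing_interval_def by auto
qed

lemma decreasing_inv_pm:
  assumes pi: "partial_iso r" and dec: "decreasing_interval r a b"
  shows "increasing_interval (inv_pm r) a b"
proof -
  have ends: "r a = Some a" "r b = Some b" using dec unfolding decreasing_interval_def by auto
  have "c < the (inv_pm r c)" if "c \<in> dom (inv_pm r) \<inter> {a<..<b}" for c
  proof -
    from that obtain x where x: "inv_pm r c = Some x" "a < c" "c < b" by auto
    with inv_pm_in_gap[OF pi ends] have "r x = Some c" "x \<in> dom r \<inter> {a<..<b}" by auto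
    then show ?thesis using dec x(1) unfolding decreasing_interval_def by force
  qed
  then show ?thesis using ends inv_pm_Some_iff[OF pi] unfolding increasing_interval_def by auto
qed

lemma framed_inv_pm: "framed r xs d \<Longrightarrow> framed (inv_pm r) xs (\<lambda>i. \<not> d i)"
proof -
  assume g: "framed r xs d"
  note pi = framed_partial_iso[OF g]
  have "dom (inv_pm r) \<subseteq> {hd xs..last xs}"
    unfolding dom_inv_pm using framed_ran[OF g] by (auto simp: ran_def)
  moreover have "\<forall>x\<in>set xs. inv_pm r x = Some x" using framed_fix[OF g] inv_pm_Some_iff[OF pi] by simp
  moreover have "if \<not> d i then increasing_interval (inv_pm r) (xs!i) (xs!(i+1))
      else decreasing_interval (inv_pm r) (xs!i) (xs!(i+1))" if "i + 1 < length xs" for i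
    using framed_gap[OF g that] increasing_inv_pm[OF pi] decreasing_inv_pm[OF pi] by auto
  ultimately show ?thesis using g partial_iso_inv_pm[OF pi] unfolding framed_def by blast
qed

section \<open>Extending a framed partial isomorphism by one point\<close>

lemma finite_separation:
  fixes A B :: "'a::linordered_field set"
  assumes "finite A" "finite B" "A \<noteq> {}" "B \<noteq> {}" "\<forall>a\<in>A. \<forall>b\<in>B. a < b"
  shows "\<exists>z. (\<forall>a\<in>A. a < z) \<and> (\<forall>b\<in>B. z < b)"
proof -
  have "Max A < Min B" using assms by (simp add: Max_in Min_in)
  then have "Max A < (Max A + Min B) / 2" "(Max A + Min B) / 2 < Min B" by (simp_all add: field_simps)
  then show ?thesis using assms(1,2)
    by (intro exI[of _ "(Max A + Min B) / 2"]) (meson Max_ge Min_le le_less_trans less_le_trans)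
qed

lemma partial_iso_upd:
  assumes pi: "partial_iso r"
    and below: "\<forall>x\<in>dom r. x < v \<longrightarrow> the (r x) < z"
    and above: "\<forall>x\<in>dom r. v < x \<longrightarrow> z < the (r x)"
  shows "partial_iso (r(v \<mapsto> z))"
  unfolding partial_iso_def
proof (intro conjI ballI impI)
  show "finite (dom (r(v \<mapsto> z)))" using pi unfolding partial_iso_def by simp
  fix x y assume "x \<in> dom (r(v \<mapsto> z))" "y \<in> dom (r(v \<mapsto> z))" "x < y"
  then show "the ((r(v \<mapsto> z)) x) < the ((r(v \<mapsto> z)) y)"
    using below above pi unfolding partial_iso_def by (cases "x = v"; cases "y = v") auto
qed

lemma partial_iso_extend:
  assumes pi: "partial_iso r" and lohi: "lo < hi"
    and lo: "\<forall>x\<in>dom r. v < x \<longrightarrow> lo < the (r x)"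
    and hi: "\<forall>x\<in>dom r. x < v \<longrightarrow> the (r x) < hi"
  obtains z where "lo < z" "z < hi" "partial_iso (r(v \<mapsto> z))"
proof -
  define A where "A = insert lo ((\<lambda>x. the (r x)) ` {x\<in>dom r. x < v})"
  define B where "B = insert hi ((\<lambda>x. the (r x)) ` {x\<in>dom r. v < x})"
  have "the (r x) < the (r y)" if "x \<in> dom r" "y \<in> dom r" "x < v" "v < y" for x y
    using pi that unfolding partial_iso_def by auto
  then have "\<forall>a\<in>A. \<forall>b\<in>B. a < b" using lohi lo hi unfolding A_def B_def by auto
  moreover have "finite A" "finite B" using pi unfolding A_def B_def partial_iso_def by auto
  ultimately obtain z where zA: "\<forall>a\<in>A. a < z" and zB: "\<forall>b\<in>B. z < b"
    using finite_separation[of A B] unfolding A_def B_def by blast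
  then have "partial_iso (r(v \<mapsto> z))"
    using partial_iso_upd[OF pi] unfolding A_def B_def by auto
  then show ?thesis using that zA zB unfolding A_def B_def by auto
qed

lemma increasing_interval_upd:
  "increasing_interval r a b \<Longrightarrow> v \<noteq> a \<Longrightarrow> v \<noteq> b \<Longrightarrow> (a < v \<Longrightarrow> v < b \<Longrightarrow> v < z) \<Longrightarrow>
   increasing_interval (r(v \<mapsto> z)) a b"
  unfolding increasing_interval_def by auto

lemma decreasing_interval_upd:
  "decreasing_interval r a b \<Longrightarrow> v \<noteq> a \<Longrightarrow> v \<noteq> b \<Longrightarrow> (a < v \<Longrightarrow> v < b \<Longrightarrow> z < v) \<Longrightarrow>
   decreasing_interval (r(v \<mapsto> z)) a b"
  unfolding decreasing_interval_def by auto

lemma framed_extend: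
  assumes g: "framed r xs d" and i: "i + 1 < length xs" "xs!i < v" "v < xs!(i+1)"
    and v: "v \<notin> dom r" and lohi: "lo < hi"
    and lo: "\<forall>x\<in>dom r. v < x \<longrightarrow> lo < the (r x)"
    and hi: "\<forall>x\<in>dom r. x < v \<longrightarrow> the (r x) < hi"
    and inc: "d i \<Longrightarrow> v \<le> lo" and dec: "\<not> d i \<Longrightarrow> hi \<le> v"
  shows "\<exists>z. lo < z \<and> z < hi \<and> framed (r(v \<mapsto> z)) xs d"
proof -
  have sxs: "sorted_wrt (<) xs" using g unfolding framed_def by simp
  obtain z where z: "lo < z" "z < hi" and pi': "partial_iso (r(v \<mapsto> z))"
    using partial_iso_extend[OF framed_partial_iso[OF g] lohi lo hi] .
  have v_range: "hd xs \<le> v \<and> v \<le> last xs"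
    using sorted_nth_bounds[OF sxs, of i] sorted_nth_bounds[OF sxs, of "i+1"] i by auto
  have v_frame: "v \<notin> set xs" using framed_fix[OF g] v by auto
  have gaps: "if d j then increasing_interval (r(v \<mapsto> z)) (xs!j) (xs!(j+1))
              else decreasing_interval (r(v \<mapsto> z)) (xs!j) (xs!(j+1))" if j: "j + 1 < length xs" for j
  proof -
    have ends: "v \<noteq> xs!j" "v \<noteq> xs!(j+1)" using v_frame j by auto
    have "j = i" if "xs!j < v" "v < xs!(j+1)"
      using sorted_gap_unique[OF sxs j i(1) that i(2,3)] .
    then show ?thesis
      using framed_gap[OF g j] inc dec z ends
      by (auto intro!: increasing_interval_upd decreasing_interval_upd)
  qed
  have "dom (r(v \<mapsto> z)) \<subseteq> {hd xs..last xs}" "\<forall>x\<in>set xs. (r(v \<mapsto> z)) x = Some x"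
    using g v_range v_frame unfolding framed_def by auto
  then have "framed (r(v \<mapsto> z)) xs d" using g pi' gaps unfolding framed_def by blast
  then show ?thesis using z by blast
qed

section \<open>Moving a point up through a gap\<close>

lemma image_above_increasing:
  assumes g: "framed r xs d" and di: "d i" and i: "i + 1 < length xs" "xs!i < x"
    and rx: "r x = Some y" and t: "t \<le> x" "t < xs!(i+1)"
  shows "t < y"
proof (cases "x < xs!(i+1)")
  case True
  then have "x \<in> dom r \<inter> {xs!i<..<xs!(i+1)}" using i rx by auto
  then have "x < the (r x)" using framed_gap[OF g i(1)] di unfolding increasing_interval_def by auto
  then show ?thesis using rx t by simp
next
  case False
  then have "xs!(i+1) \<le> y"
    using partial_iso_le[OF framed_partial_iso[OF g] _ rx] framed_fix[OF g, of "xs!(i+1)"] i by simp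
  then show ?thesis using t by simp
qed

lemma image_below_decreasing:
  assumes g: "framed r xs d" and di: "\<not> d i" and i: "i + 1 < length xs" "x < xs!(i+1)"
    and rx: "r x = Some y" and t: "x \<le> t" "xs!i < t"
  shows "y < t"
proof (cases "xs!i < x")
  case True
  then have "x \<in> dom r \<inter> {xs!i<..<xs!(i+1)}" using i rx by auto
  then have "the (r x) < x" using framed_gap[OF g i(1)] di unfolding decreasing_interval_def by auto
  then show ?thesis using rx t by simp
next
  case False
  then have "y \<le> xs!i"
    using partial_iso_le[OF framed_partial_iso[OF g] rx] framed_fix[OF g, of "xs!i"] i by simp
  then show ?thesis using t by simp
qed

text \<open>Extending the inverse of r (framed with the negated directions) is the same as extending r.
  This reduces statements about decreasing gaps to increasing ones.\<close>

lemma framed_extension_via_inv: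
  assumes g: "framed r xs d" and r': "framed r' xs (\<lambda>i. \<not> d i)" "inv_pm r \<subseteq>\<^sub>m r'"
  shows "framed (inv_pm r') xs d \<and> r \<subseteq>\<^sub>m inv_pm r' \<and> inv_pm (inv_pm r') = r'"
proof -
  note pi = framed_partial_iso[OF g] and pi' = framed_partial_iso[OF r'(1)]
  have "r \<subseteq>\<^sub>m inv_pm r'"
    using inv_pm_mono[OF r'(2) partial_iso_inv_pm[OF pi] pi'] inv_pm_inv_pm[OF pi] by simp
  then show ?thesis using framed_inv_pm[OF r'(1)] inv_pm_inv_pm[OF pi'] by simp
qed

text \<open>The threshold is what makes repeated advancing terminate.\<close>

lemma advance_increasing:
  assumes g: "framed r xs d" and di: "d i" and i: "i + 1 < length xs" "xs!i < y" "y < xs!(i+1)"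
    and t: "y \<le> t" "t < xs!(i+1)" "\<forall>x\<in>dom r \<union> ran r. y < x \<longrightarrow> t \<le> x"
  shows "\<exists>r' y'. framed r' xs d \<and> r \<subseteq>\<^sub>m r' \<and> r' y = Some y' \<and> y < y' \<and> y' < xs!(i+1) \<and>
     dom r' \<union> ran r' \<subseteq> dom r \<union> ran r \<union> {y, y'} \<and> (y' \<in> dom r \<union> ran r \<or> t < y')"
proof (cases "y \<in> dom r")
  case True
  then obtain y' where ry: "r y = Some y'" by auto
  have "y \<in> dom r \<inter> {xs!i<..<xs!(i+1)}" using True i by auto
  then have "y < y'" using framed_gap[OF g i(1)] di ry unfolding increasing_interval_def by force
  moreover have "y' < xs!(i+1)"
    using partial_iso_less[OF framed_partial_iso[OF g] ry framed_fix[OF g, of "xs!(i+1)"]] i by simp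
  moreover have "y' \<in> ran r" using ry by (auto simp: ran_def)
  ultimately show ?thesis using ry g by (intro exI[of _ r] exI[of _ y']) auto
next
  case False
  have sxs: "sorted_wrt (<) xs" using g unfolding framed_def by simp
  have lo: "\<forall>x\<in>dom r. y < x \<longrightarrow> t < the (r x)"
  proof (intro ballI impI)
    fix x assume x: "x \<in> dom r" "y < x"
    then obtain yx where yx: "r x = Some yx" by auto
    have "xs!i < x" "t \<le> x" using i(2) t(3) x by auto
    then show "t < the (r x)" using image_above_increasing[OF g di i(1) _ yx _ t(2)] yx by simp
  qed
  have hi: "\<forall>x\<in>dom r. x < y \<longrightarrow> the (r x) < last xs + 1"
    using framed_ran[OF g] by fastforce
  have "xs!(i+1) \<le> last xs" using sorted_nth_bounds[OF sxs i(1)] by simp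
  then obtain z where z: "t < z" "framed (r(y \<mapsto> z)) xs d"
    using framed_extend[OF g i False, of t "last xs + 1"] lo hi t di by auto
  have "z < xs!(i+1)"
    using partial_iso_less[OF framed_partial_iso[OF z(2)], of y z "xs!(i+1)" "xs!(i+1)"]
      framed_fix[OF z(2), of "xs!(i+1)"] i by simp
  moreover have "dom (r(y \<mapsto> z)) \<union> ran (r(y \<mapsto> z)) \<subseteq> dom r \<union> ran r \<union> {y, z}"
    using False by (auto simp: ran_map_upd domIff)
  moreover have "r \<subseteq>\<^sub>m r(y \<mapsto> z)" using False by (auto simp: map_le_def)
  ultimately show ?thesis using z t(1) by (intro exI[of _ "r(y \<mapsto> z)"] exI[of _ z]) auto
qed

text \<open>In a decreasing gap the same holds for the inverse map; we apply the increasing case to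
  the inverse, whose frame has the opposite directions.\<close>

lemma advance:
  assumes g: "framed r xs d" and i: "i + 1 < length xs" "xs!i < y" "y < xs!(i+1)"
    and t: "y \<le> t" "t < xs!(i+1)" "\<forall>x\<in>dom r \<union> ran r. y < x \<longrightarrow> t \<le> x"
  shows "\<exists>r' y'. framed r' xs d \<and> r \<subseteq>\<^sub>m r' \<and> (if d i then r' else inv_pm r') y = Some y' \<and>
     y < y' \<and> y' < xs!(i+1) \<and>
     dom r' \<union> ran r' \<subseteq> dom r \<union> ran r \<union> {y, y'} \<and> (y' \<in> dom r \<union> ran r \<or> t < y')"
proof (cases "d i")
  case True
  then show ?thesis using advance_increasing[OF g True i t] by simp
next
  case False
  have du: "dom (inv_pm r) \<union> ran (inv_pm r) = dom r \<union> ran r"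
    using dom_inv_pm ran_inv_pm[OF framed_partial_iso[OF g]] by auto
  obtain r' y' where r': "framed r' xs (\<lambda>i. \<not> d i)" "inv_pm r \<subseteq>\<^sub>m r'" "r' y = Some y'"
    "y < y'" "y' < xs!(i+1)" "dom r' \<union> ran r' \<subseteq> dom r \<union> ran r \<union> {y, y'}"
    "y' \<in> dom r \<union> ran r \<or> t < y'"
    using advance_increasing[OF framed_inv_pm[OF g] _ i t(1,2)] False t(3) du by auto
  have "dom (inv_pm r') \<union> ran (inv_pm r') = dom r' \<union> ran r'"
    using dom_inv_pm ran_inv_pm[OF framed_partial_iso[OF r'(1)]] by auto
  then show ?thesis using framed_extension_via_inv[OF g r'(1,2)] r' False
    by (intro exI[of _ "inv_pm r'"] exI[of _ y']) auto
qed

lemma framed_cover_point: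
  assumes g: "framed r xs d" and v: "hd xs \<le> v" "v \<le> last xs"
  shows "\<exists>r'. framed r' xs d \<and> r \<subseteq>\<^sub>m r' \<and> v \<in> dom r'"
proof (cases "v \<in> dom r")
  case False
  have sxs: "sorted_wrt (<) xs" and ne: "xs \<noteq> []" using g unfolding framed_def by auto
  have "v \<notin> set xs" using False framed_fix[OF g] by auto
  moreover from this have "v \<noteq> hd xs" "v \<noteq> last xs" using ne by auto
  ultimately obtain i where i: "i + 1 < length xs" "xs!i < v" "v < xs!(i+1)"
    using sorted_find_gap[OF ne sxs] v by force
  have "\<exists>z. framed (r(v \<mapsto> z)) xs d"
  proof (cases "d i")
    case True
    have "\<forall>x\<in>dom r. v < x \<longrightarrow> v < the (r x)"
    proof (intro ballI impI)
      fix x assume x: "x \<in> dom r" "v < x"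
      then obtain yx where yx: "r x = Some yx" by auto
      have "xs!i < x" using i(2) x(2) by simp
      then show "v < the (r x)" using image_above_increasing[OF g True i(1) _ yx _ i(3)] x yx by simp
    qed
    moreover have "\<forall>x\<in>dom r. x < v \<longrightarrow> the (r x) < last xs + 1"
      using framed_ran[OF g] by fastforce
    ultimately show ?thesis using framed_extend[OF g i False, of v "last xs + 1"] True v by auto
  next
    case dec: False
    have "\<forall>x\<in>dom r. x < v \<longrightarrow> the (r x) < v"
    proof (intro ballI impI)
      fix x assume x: "x \<in> dom r" "x < v"
      then obtain yx where yx: "r x = Some yx" by auto
      have "x < xs!(i+1)" using i(3) x(2) by simp
      then show "the (r x) < v" using image_below_decreasing[OF g dec i(1) _ yx _ i(2)] x yx by simp
    qed
    moreover have "\<forall>x\<in>dom r. v < x \<longrightarrow> hd xs - 1 < the (r x)"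
      using framed_ran[OF g] by fastforce
    ultimately show ?thesis using framed_extend[OF g i False, of "hd xs - 1" v] dec v by auto
  qed
  moreover have "r \<subseteq>\<^sub>m r(v \<mapsto> z)" for z using False by (auto simp: map_le_def)
  ultimately show ?thesis by auto
qed (use g in auto)

lemma framed_cover:
  assumes "finite C" "framed r xs d" "C \<subseteq> {hd xs..last xs}"
  shows "\<exists>r'. framed r' xs d \<and> r \<subseteq>\<^sub>m r' \<and> C \<subseteq> dom r'"
  using assms
proof (induction C arbitrary: r rule: finite_induct)
  case (insert c C)
  have "\<exists>r1. framed r1 xs d \<and> r \<subseteq>\<^sub>m r1 \<and> C \<subseteq> dom r1" using insert.IH insert.prems by auto
  then obtain r1 where r1: "framed r1 xs d" "r \<subseteq>\<^sub>m r1" "C \<subseteq> dom r1" by blast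
  have "hd xs \<le> c" "c \<le> last xs" using insert.prems by auto
  then obtain r2 where r2: "framed r2 xs d" "r1 \<subseteq>\<^sub>m r2" "c \<in> dom r2"
    using framed_cover_point[OF r1(1)] by blast
  have "insert c C \<subseteq> dom r2" using r1(3) r2(2,3) map_le_implies_dom_le by blast
  then show ?case using r2(1) map_le_trans[OF r1(2) r2(2)] by blast
qed auto

lemma framed_cover_dir:
  assumes g: "framed r xs d" and C: "finite C" "C \<subseteq> {hd xs..last xs}"
  shows "\<exists>r'. framed r' xs d \<and> r \<subseteq>\<^sub>m r' \<and> C \<subseteq> dom (if b then r' else inv_pm r')"
proof (cases b)
  case True then show ?thesis using framed_cover[OF C(1) g C(2)] by simp
next
  case False
  obtain r' where r': "framed r' xs (\<lambda>i. \<not> d i)" "inv_pm r \<subseteq>\<^sub>m r'" "C \<subseteq> dom r'"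
    using framed_cover[OF C(1) framed_inv_pm[OF g] C(2)] by blast
  then show ?thesis using framed_extension_via_inv[OF g r'(1,2)] False
    by (intro exI[of _ "inv_pm r'"]) simp
qed

section \<open>Evaluating words\<close>

fun gen_map :: "(rat \<rightharpoonup> rat) \<Rightarrow> (rat \<rightharpoonup> rat) \<Rightarrow> gen \<Rightarrow> (rat \<rightharpoonup> rat)" where
  "gen_map p q S = p" | "gen_map p q T = q"

lemma act_eq: "act p q (G, b) = (if b then gen_map p q G else inv_pm (gen_map p q G))"
  by (cases G; cases b) auto

lemma partial_iso_act: "partial_iso p \<Longrightarrow> partial_iso q \<Longrightarrow> partial_iso (act p q l)"
  by (cases l, rename_tac G b, case_tac G; case_tac b) (auto intro: partial_iso_inv_pm)

lemma act_mono:
  assumes "p \<subseteq>\<^sub>m p'" "q \<subseteq>\<^sub>m q'" "partial_iso p" "partial_iso q" "partial_iso p'" "partial_iso q'"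
  shows "act p q l \<subseteq>\<^sub>m act p' q' l"
  using assms inv_pm_mono by (cases l, rename_tac G b, case_tac G; case_tac b) auto

lemma word_eval_less:
  assumes "partial_iso p" "partial_iso q"
  shows "word_eval p q w c = Some x \<Longrightarrow> word_eval p q w c' = Some x' \<Longrightarrow> c < c' \<Longrightarrow> x < x'"
proof (induction w arbitrary: x x')
  case (Cons l w)
  then obtain d d' where "word_eval p q w c = Some d" "act p q l d = Some x"
    "word_eval p q w c' = Some d'" "act p q l d' = Some x'"
    by (auto split: option.splits)
  then show ?case using Cons.IH partial_iso_less[OF partial_iso_act[OF assms]] Cons.prems(3) by blast
qed simp

text \<open>Ascending words are reduced, which is how reducedness of the
  liberating word is obtained.\<close>

fun ascending :: "(rat \<rightharpoonup> rat) \<Rightarrow> (rat \<rightharpoonup> rat) \<Rightarrow> word \<Rightarrow> rat \<Rightarrow> bool" where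
  "ascending p q [] c = True"
| "ascending p q (l # w) c \<longleftrightarrow> ascending p q w c \<and>
     (\<exists>d e. word_eval p q w c = Some d \<and> act p q l d = Some e \<and> d < e)"

lemma word_eval_mono:
  assumes "p \<subseteq>\<^sub>m p'" "q \<subseteq>\<^sub>m q'" "partial_iso p" "partial_iso q" "partial_iso p'" "partial_iso q'"
  shows "word_eval p q w c = Some d \<Longrightarrow> word_eval p' q' w c = Some d"
proof (induction w arbitrary: d)
  case (Cons l w)
  then obtain d0 where d0: "word_eval p q w c = Some d0" "act p q l d0 = Some d"
    by (auto split: option.splits)
  have "act p' q' l d0 = Some d" using act_mono[OF assms, of l] d0(2) by (metis domI map_le_def)
  then show ?case using Cons.IH[OF d0(1)] by simp
qed simp

lemma ascending_mono:
  assumes "p \<subseteq>\<^sub>m p'" "q \<subseteq>\<^sub>m q'" "partial_iso p" "partial_iso q" "partial_iso p'" "partial_iso q'"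
  shows "ascending p q w c \<Longrightarrow> ascending p' q' w c"
proof (induction w)
  case (Cons l w)
  then obtain d e where de: "word_eval p q w c = Some d" "act p q l d = Some e" "d < e" by auto
  have "act p' q' l d = Some e" using act_mono[OF assms, of l] de(2) by (metis domI map_le_def)
  then show ?case using Cons word_eval_mono[OF assms de(1)] de(3) by auto
qed simp

lemma reduced_Cons:
  "reduced (a # w) \<longleftrightarrow> (w \<noteq> [] \<longrightarrow> \<not> (fst a = fst (hd w) \<and> snd a \<noteq> snd (hd w))) \<and> reduced w"
proof
  assume r: "reduced (a # w)"
  have 1: "w \<noteq> [] \<longrightarrow> \<not> (fst a = fst (hd w) \<and> snd a \<noteq> snd (hd w))"
    using r[unfolded reduced_def, rule_format, of 0] by (auto simp: hd_conv_nth)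
  have "reduced w" unfolding reduced_def
  proof (intro allI impI)
    fix i assume "i + 1 < length w"
    then show "\<not> (fst (w ! i) = fst (w ! (i + 1)) \<and> snd (w ! i) \<noteq> snd (w ! (i + 1)))"
      using r[unfolded reduced_def, rule_format, of "Suc i"] by simp
  qed
  then show "(w \<noteq> [] \<longrightarrow> \<not> (fst a = fst (hd w) \<and> snd a \<noteq> snd (hd w))) \<and> reduced w" using 1 by simp
next
  assume h: "(w \<noteq> [] \<longrightarrow> \<not> (fst a = fst (hd w) \<and> snd a \<noteq> snd (hd w))) \<and> reduced w"
  show "reduced (a # w)" unfolding reduced_def
  proof (intro allI impI)
    fix i assume i: "i + 1 < length (a # w)"
    show "\<not> (fst ((a # w) ! i) = fst ((a # w) ! (i + 1)) \<and> snd ((a # w) ! i) \<noteq> snd ((a # w) ! (i + 1)))"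
    proof (cases i)
      case 0
      then show ?thesis using h i by (auto simp: hd_conv_nth)
    next
      case (Suc j)
      then show ?thesis using h i unfolding reduced_def by auto
    qed
  qed
qed

text \<open>Cancelling letters would move a point up and then back down again.\<close>

lemma ascending_reduced:
  assumes pi: "partial_iso p" "partial_iso q"
  shows "ascending p q w c \<Longrightarrow> reduced w"
proof (induction w)
  case Nil then show ?case by (simp add: reduced_def)
next
  case (Cons l w)
  show ?case
  proof (cases w)
    case Nil then show ?thesis by (simp add: reduced_def)
  next
    case (Cons l2 w')
    from \<open>ascending p q (l # w) c\<close> Cons obtain d0 d e where
      d0: "word_eval p q w' c = Some d0" "act p q l2 d0 = Some d"
      and de: "act p q l d = Some e" "d0 < d" "d < e"
      by (auto split: option.splits)
    obtain G b G2 b2 where l: "l = (G, b)" and l2: "l2 = (G2, b2)" by (cases l, cases l2)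
    have pm: "partial_iso (gen_map p q G)" using pi by (cases G) auto
    have "\<not> (G = G2 \<and> b \<noteq> b2)"
    proof
      assume "G = G2 \<and> b \<noteq> b2"
      then have "act p q l d = Some d0" using d0(2) l l2 inv_pm_Some_iff[OF pm] by (auto simp: act_eq)
      then show False using de by simp
    qed
    then show ?thesis using Cons.IH Cons.prems \<open>w = l2 # w'\<close> l l2 by (simp add: reduced_Cons)
  qed
qed

section \<open>Two frames with common ends\<close>

definition points :: "(rat \<rightharpoonup> rat) \<Rightarrow> (rat \<rightharpoonup> rat) \<Rightarrow> rat set" where
  "points p q = dom p \<union> ran p \<union> dom q \<union> ran q"

lemma finite_points: "partial_iso p \<Longrightarrow> partial_iso q \<Longrightarrow> finite (points p q)"
  unfolding points_def using finite_ran_partial_iso by (auto simp: partial_iso_def)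

lemma card_points_above:
  fixes y y' s :: rat
  assumes fin: "finite D" and D': "D' \<subseteq> D \<union> {y, y'}" and yy: "y < y'"
  shows "card {x\<in>D'. y' < x} \<le> card {x\<in>D. y < x}"
    and "s \<in> D \<Longrightarrow> y < s \<Longrightarrow> s \<le> y' \<Longrightarrow> card {x\<in>D'. y' < x} < card {x\<in>D. y < x}"
proof -
  have sub: "{x\<in>D'. y' < x} \<subseteq> {x\<in>D. y < x}" using D' yy by auto
  have fin2: "finite {x\<in>D. y < x}" using fin by simp
  show "card {x\<in>D'. y' < x} \<le> card {x\<in>D. y < x}" using card_mono[OF fin2 sub] .
  assume "s \<in> D" "y < s" "s \<le> y'"
  then have "s \<in> {x\<in>D. y < x}" "s \<notin> {x\<in>D'. y' < x}" by auto
  then have "{x\<in>D'. y' < x} \<subset> {x\<in>D. y < x}" using sub by blast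
  then show "card {x\<in>D'. y' < x} < card {x\<in>D. y < x}" using psubset_card_mono[OF fin2] by blast
qed

text \<open>For the rest of the construction p is framed by (xsp, dp) and q by (xsq, dq), where the
  two frames have the same ends m < M and no other common point; this is what elementarity
  of the pair provides. The last gap of q is the interval (xsq!kq, M).\<close>

locale two_frames =
  fixes xsp :: "rat list" and dp :: "nat \<Rightarrow> bool" and xsq :: "rat list" and dq :: "nat \<Rightarrow> bool"
  assumes sorted_p: "sorted_wrt (<) xsp" and sorted_q: "sorted_wrt (<) xsq"
    and nonempty_p: "xsp \<noteq> []" and nonempty_q: "xsq \<noteq> []"
    and same_hd: "hd xsq = hd xsp" and same_last: "last xsq = last xsp"
    and frames_meet: "set xsp \<inter> set xsq \<subseteq> {hd xsp, last xsp}"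
    and ends_less: "hd xsp < last xsp"
begin

abbreviation framed_pair :: "(rat \<rightharpoonup> rat) \<Rightarrow> (rat \<rightharpoonup> rat) \<Rightarrow> bool" where
  "framed_pair p q \<equiv> framed p xsp dp \<and> framed q xsq dq"

abbreviation kq :: nat where "kq \<equiv> length xsq - 2"

lemma last_gap: "kq + 1 < length xsq" "xsq ! (kq + 1) = last xsp"
proof -
  have "length xsq \<noteq> 1" using ends_less same_hd same_last by (cases xsq) auto
  moreover have "length xsq \<noteq> 0" using nonempty_q by simp
  ultimately have "2 \<le> length xsq" by linarith
  then have "kq + 1 = length xsq - 1" by linarith
  then show "kq + 1 < length xsq" "xsq ! (kq + 1) = last xsp"
    using nonempty_q same_last by (auto simp: last_conv_nth)
qed

lemma gap_end_le_last:
  "(xs = xsp \<or> xs = xsq) \<Longrightarrow> i + 1 < length xs \<Longrightarrow> xs!(i+1) \<le> last xsp"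
  using sorted_nth_bounds[OF sorted_p] sorted_nth_bounds[OF sorted_q] same_last by auto

lemma frames_in_points: "framed_pair p q \<Longrightarrow> set xsp \<union> set xsq \<subseteq> points p q"
  unfolding points_def using framed_fix by blast

lemma framed_pair_ext:
  assumes "framed_pair p q" "framed_pair p' q'" "p \<subseteq>\<^sub>m p'" "q \<subseteq>\<^sub>m q'"
  shows "word_eval p q w c = Some d \<Longrightarrow> word_eval p' q' w c = Some d"
    and "ascending p q w c \<Longrightarrow> ascending p' q' w c"
proof -
  have pi: "partial_iso p" "partial_iso q" "partial_iso p'" "partial_iso q'"
    using assms(1,2) framed_partial_iso by blast+
  show "word_eval p q w c = Some d \<Longrightarrow> word_eval p' q' w c = Some d"
    using word_eval_mono[OF assms(3,4) pi] .
  show "ascending p q w c \<Longrightarrow> ascending p' q' w c"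
    using ascending_mono[OF assms(3,4) pi] .
qed

lemma act_open:
  assumes "framed_pair p q" "act p q l x = Some y" "hd xsp < x" "x < last xsp"
  shows "hd xsp < y \<and> y < last xsp"
  using assms framed_open[of p xsp dp] framed_open[of q xsq dq]
    framed_open[OF framed_inv_pm[of p xsp dp]] framed_open[OF framed_inv_pm[of q xsq dq]]
    same_hd same_last
  by (cases l, rename_tac G b, case_tac G; case_tac b) auto

lemma word_open:
  assumes "framed_pair p q"
  shows "word_eval p q w x = Some y \<Longrightarrow> hd xsp < x \<Longrightarrow> x < last xsp \<Longrightarrow> hd xsp < y \<and> y < last xsp"
proof (induction w arbitrary: y)
  case (Cons l w)
  then obtain d where "word_eval p q w x = Some d" "act p q l d = Some y"
    by (auto split: option.splits)
  then show ?case using Cons act_open[OF assms] by blast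
qed simp

lemma framed_pair_cover_letter:
  assumes fp: "framed_pair p q" and C: "finite C" "C \<subseteq> {hd xsp..last xsp}"
  shows "\<exists>p' q'. framed_pair p' q' \<and> p \<subseteq>\<^sub>m p' \<and> q \<subseteq>\<^sub>m q' \<and>
           C \<subseteq> dom (act p' q' l) \<and> (fst l = T \<longrightarrow> p' = p)"
proof -
  obtain G b where l: "l = (G, b)" by (cases l)
  show ?thesis
  proof (cases G)
    case S
    obtain r where "framed r xsp dp" "p \<subseteq>\<^sub>m r" "C \<subseteq> dom (if b then r else inv_pm r)"
      using framed_cover_dir[OF _ C] fp by blast
    then show ?thesis using fp l S by (intro exI[of _ r] exI[of _ q]) (auto simp: act_eq)
  next
    case T
    obtain r where "framed r xsq dq" "q \<subseteq>\<^sub>m r" "C \<subseteq> dom (if b then r else inv_pm r)"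
      using framed_cover_dir[OF _ C(1)] fp C(2) same_hd same_last by (metis)
    then show ?thesis using fp l T by (intro exI[of _ p] exI[of _ r]) (auto simp: act_eq)
  qed
qed

lemma extend_to_define:
  assumes C: "finite C" "C \<subseteq> {hd xsp<..<last xsp}"
  shows "framed_pair p q \<Longrightarrow> \<forall>c\<in>C. word_eval p q w c \<noteq> None \<Longrightarrow>
    \<exists>p' q'. framed_pair p' q' \<and> p \<subseteq>\<^sub>m p' \<and> q \<subseteq>\<^sub>m q' \<and>
      (\<forall>c\<in>C. word_eval p' q' (u @ w) c \<noteq> None) \<and> ((\<forall>l\<in>set u. fst l = T) \<longrightarrow> p' = p)"
proof (induction u arbitrary: p q)
  case Nil then show ?case by fastforce
next
  case (Cons l u)
  obtain p1 q1 where 1: "framed_pair p1 q1" "p \<subseteq>\<^sub>m p1" "q \<subseteq>\<^sub>m q1"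
     "\<forall>c\<in>C. word_eval p1 q1 (u @ w) c \<noteq> None" "(\<forall>l\<in>set u. fst l = T) \<longrightarrow> p1 = p"
    using Cons.IH[OF Cons.prems] by blast
  define C' where "C' = (\<lambda>c. the (word_eval p1 q1 (u @ w) c)) ` C"
  have "C' \<subseteq> {hd xsp..last xsp}"
    using word_open[OF 1(1)] 1(4) C(2) unfolding C'_def by fastforce
  then obtain p2 q2 where 2: "framed_pair p2 q2" "p1 \<subseteq>\<^sub>m p2" "q1 \<subseteq>\<^sub>m q2"
    "C' \<subseteq> dom (act p2 q2 l)" "fst l = T \<longrightarrow> p2 = p1"
    using framed_pair_cover_letter[OF 1(1), of C' l] C(1) unfolding C'_def by blast
  have "word_eval p2 q2 (l # u @ w) c \<noteq> None" if c: "c \<in> C" for c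
  proof -
    obtain y where y: "word_eval p1 q1 (u @ w) c = Some y" using 1(4) c by auto
    then have "y \<in> C'" using c unfolding C'_def by force
    then show ?thesis using y framed_pair_ext(1)[OF 1(1) 2(1-3) y] 2(4) by auto
  qed
  then show ?case using 1 2 map_le_trans by (intro exI[of _ p2] exI[of _ q2]) auto
qed

lemma pair_step:
  assumes fp: "framed_pair p q"
    and G: "(G = S \<and> xs = xsp \<and> dd = dp) \<or> (G = T \<and> xs = xsq \<and> dd = dq)"
    and i: "i + 1 < length xs" "xs!i < y" "y < xs!(i+1)"
    and ev: "word_eval p q w e0 = Some y" and asc: "ascending p q w e0"
    and t: "y \<le> t" "t < xs!(i+1)" "\<forall>x\<in>points p q. y < x \<longrightarrow> t \<le> x"
  obtains p' q' y' where "framed_pair p' q'" "p \<subseteq>\<^sub>m p'" "q \<subseteq>\<^sub>m q'" "G = T \<longrightarrow> p' = p"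
    "word_eval p' q' ((G, dd i) # w) e0 = Some y'" "ascending p' q' ((G, dd i) # w) e0"
    "y < y'" "y' < xs!(i+1)" "points p' q' \<subseteq> points p q \<union> {y, y'}" "y' \<in> points p q \<or> t < y'"
  using G
proof
  assume G: "G = S \<and> xs = xsp \<and> dd = dp"
  obtain r y' where r: "framed r xsp dp" "p \<subseteq>\<^sub>m r" "(if dp i then r else inv_pm r) y = Some y'"
     "y < y'" "y' < xsp!(i+1)" "dom r \<union> ran r \<subseteq> dom p \<union> ran p \<union> {y, y'}"
     "y' \<in> dom p \<union> ran p \<or> t < y'"
    using advance[OF _ _ _ _ t(1) _, of p xsp dp i] fp G i t(2,3) unfolding points_def by auto
  have "word_eval r q w e0 = Some y" "ascending r q w e0"
    using framed_pair_ext[OF fp _ r(2) map_le_refl] r(1) fp ev asc by auto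
  then have "word_eval r q ((G, dd i) # w) e0 = Some y'" "ascending r q ((G, dd i) # w) e0"
    using r(3,4) G by (auto simp: act_eq)
  then show ?thesis using r fp G by (intro that[of r q y']) (auto simp: points_def)
next
  assume G: "G = T \<and> xs = xsq \<and> dd = dq"
  obtain r y' where r: "framed r xsq dq" "q \<subseteq>\<^sub>m r" "(if dq i then r else inv_pm r) y = Some y'"
     "y < y'" "y' < xsq!(i+1)" "dom r \<union> ran r \<subseteq> dom q \<union> ran q \<union> {y, y'}"
     "y' \<in> dom q \<union> ran q \<or> t < y'"
    using advance[OF _ _ _ _ t(1) _, of q xsq dq i] fp G i t(2,3) unfolding points_def by auto
  have "word_eval p r w e0 = Some y" "ascending p r w e0"
    using framed_pair_ext[OF fp _ map_le_refl r(2)] r(1) fp ev asc by auto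
  then have "word_eval p r ((G, dd i) # w) e0 = Some y'" "ascending p r ((G, dd i) # w) e0"
    using r(3,4) G by (auto simp: act_eq)
  then show ?thesis using r fp G by (intro that[of p r y']) (auto simp: points_def)
qed

definition ascent :: "(rat \<rightharpoonup> rat) \<Rightarrow> (rat \<rightharpoonup> rat) \<Rightarrow> word \<Rightarrow> rat \<Rightarrow> rat \<Rightarrow> bool" where
  "ascent p q w e0 y \<longleftrightarrow> framed_pair p q \<and> word_eval p q w e0 = Some y \<and> ascending p q w e0 \<and>
     hd xsp < y \<and> y < last xsp"

text \<open>The first point above y; it exists since M is a point.\<close>

lemma next_point:
  assumes "framed_pair p q" "y < last xsp"
  obtains s where "s \<in> points p q" "y < s" "s \<le> last xsp" "\<forall>x\<in>points p q. y < x \<longrightarrow> s \<le> x"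
proof -
  let ?U = "{x \<in> points p q. y < x}"
  have fin: "finite ?U"
    using finite_points[OF framed_partial_iso framed_partial_iso] assms(1) by auto
  have "last xsp \<in> ?U" using frames_in_points[OF assms(1)] assms(2) nonempty_p by auto
  then show ?thesis using that[of "Min ?U"] fin Min_in[OF fin] by fastforce
qed

definition climb_measure :: "(rat \<rightharpoonup> rat) \<Rightarrow> (rat \<rightharpoonup> rat) \<Rightarrow> rat \<Rightarrow> nat" where
  "climb_measure p q y = 2 * card {x \<in> points p q. y < x} + (if y \<in> set xsp \<union> set xsq then 1 else 0)"

lemma climb_measure_decreases:
  assumes fp: "framed_pair p q" and sub: "points p' q' \<subseteq> points p q \<union> {y, y'}" and yy: "y < y'"
    and progress: "(\<exists>s\<in>points p q. y < s \<and> s \<le> y') \<or> y \<in> set xsp \<union> set xsq"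
  shows "climb_measure p' q' y' < climb_measure p q y"
proof -
  have fin: "finite (points p q)" using fp finite_points framed_partial_iso by blast
  note card_le = card_points_above(1)[OF fin sub yy]
  show ?thesis
  proof (cases "\<exists>s\<in>points p q. y < s \<and> s \<le> y'")
    case True
    then have "card {x \<in> points p' q'. y' < x} < card {x \<in> points p q. y < x}"
      using card_points_above(2)[OF fin sub yy] by blast
    then show ?thesis unfolding climb_measure_def by simp
  next
    case False
    then have "y' \<notin> set xsp \<union> set xsq" "y \<in> set xsp \<union> set xsq"
      using frames_in_points[OF fp] yy progress by auto
    then show ?thesis using card_le unfolding climb_measure_def by simp
  qed
qed

lemma climb_advance:
  assumes a: "ascent p q w e0 y"
    and s: "s \<in> points p q" "y < s" "\<forall>x\<in>points p q. y < x \<longrightarrow> s \<le> x"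
    and G: "(G = S \<and> xs = xsp \<and> dd = dp) \<or> (G = T \<and> xs = xsq \<and> dd = dq)"
    and i: "i + 1 < length xs" "xs!i < y" "y < xs!(i+1)"
    and t: "y \<le> t" "t < xs!(i+1)" "\<forall>x\<in>points p q. y < x \<longrightarrow> t \<le> x"
    and t_choice: "t = s \<or> y \<in> set xsp \<union> set xsq"
  shows "\<exists>p' q' w' y'. ascent p' q' w' e0 y' \<and> p \<subseteq>\<^sub>m p' \<and> q \<subseteq>\<^sub>m q' \<and>
           climb_measure p' q' y' < climb_measure p q y"
proof -
  have fp: "framed_pair p q" and ev: "word_eval p q w e0 = Some y" and asc: "ascending p q w e0"
    and ym: "hd xsp < y" using a unfolding ascent_def by auto
  obtain p' q' y' where r: "framed_pair p' q'" "p \<subseteq>\<^sub>m p'" "q \<subseteq>\<^sub>m q'" "G = T \<longrightarrow> p' = p"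
    "word_eval p' q' ((G, dd i) # w) e0 = Some y'" "ascending p' q' ((G, dd i) # w) e0"
    "y < y'" "y' < xs!(i+1)" "points p' q' \<subseteq> points p q \<union> {y, y'}" "y' \<in> points p q \<or> t < y'"
    by (rule pair_step[OF fp G i ev asc t])
  have "xs = xsp \<or> xs = xsq" using G by blast
  then have "y' < last xsp" using r(8) gap_end_le_last[OF _ i(1)] by fastforce
  then have "ascent p' q' ((G, dd i) # w) e0 y'" using r(1,5,6,7) ym unfolding ascent_def by simp
  moreover have "(\<exists>s\<in>points p q. y < s \<and> s \<le> y') \<or> y \<in> set xsp \<union> set xsq"
  proof (cases "y \<in> set xsp \<union> set xsq")
    case False
    then have "t = s" using t_choice by simp
    show ?thesis
    proof (cases "y' \<in> points p q")
      case True then show ?thesis using r(7) by blast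
    next
      case False then show ?thesis using r(10) s(1,2) \<open>t = s\<close> by (blast intro: less_imp_le)
    qed
  qed simp
  ultimately show ?thesis using climb_measure_decreases[OF fp r(9,7)] r(2,3) by blast
qed

lemma frame_gap:
  assumes "xs = xsp \<or> xs = xsq" "hd xsp < y" "y < last xsp" "y \<notin> set xs"
  obtains i where "i + 1 < length xs" "xs!i < y" "y < xs!(i+1)"
proof -
  have "xs \<noteq> []" "sorted_wrt (<) xs" "hd xs < y" "y < last xs"
    using assms nonempty_p nonempty_q sorted_p sorted_q same_hd same_last by auto
  then show ?thesis using sorted_find_gap assms(4) that by blast
qed

lemma common_frame_point:
  assumes j: "j + 1 < length xsq" and common: "xsq!(j+1) \<in> set xsp" and above: "hd xsp < xsq!(j+1)"
  shows "j = kq"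
proof -
  have "xsq!(j+1) = xsq!(kq+1)"
    using frames_meet common above j last_gap(2) nth_mem by fastforce
  moreover have "j \<le> kq" using j by linarith
  ultimately show "j = kq"
    using sorted_nth_less[OF sorted_q, of "j+1" "kq+1"] last_gap(1) by fastforce
qed

text \<open>If y is a fixed point
  of one map, we advance with the other one; otherwise we advance with a map whose gap around y
  contains the next point s above y. If neither gap does, s is a common frame point, so s = M
  and y lies in the last gap of q after all.\<close>

lemma climb_step:
  assumes a: "ascent p q w e0 y" and below: "\<not> xsq ! kq < y"
  shows "\<exists>p' q' w' y'. ascent p' q' w' e0 y' \<and> p \<subseteq>\<^sub>m p' \<and> q \<subseteq>\<^sub>m q' \<and>
           climb_measure p' q' y' < climb_measure p q y"
proof -
  have fp: "framed_pair p q" and ym: "hd xsp < y" "y < last xsp" using a unfolding ascent_def by auto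
  obtain s where s: "s \<in> points p q" "y < s" "s \<le> last xsp" "\<forall>x\<in>points p q. y < x \<longrightarrow> s \<le> x"
    using next_point[OF fp ym(2)] .
  note advance = climb_advance[OF a s(1,2,4)]
  show ?thesis
  proof (cases "y \<in> set xsp \<union> set xsq")
    case True
    then consider "y \<notin> set xsq" | "y \<notin> set xsp" using frames_meet ym by fastforce
    then show ?thesis
    proof cases
      case 1
      then obtain j where "j + 1 < length xsq" "xsq!j < y" "y < xsq!(j+1)" using frame_gap ym by blast
      then show ?thesis using True by (intro advance[of T xsq dq j y]) auto
    next
      case 2
      then obtain i where "i + 1 < length xsp" "xsp!i < y" "y < xsp!(i+1)" using frame_gap ym by blast
      then show ?thesis using True by (intro advance[of S xsp dp i y]) auto
    qed
  next
    case False
    obtain i where i: "i + 1 < length xsp" "xsp!i < y" "y < xsp!(i+1)" using frame_gap ym False by blast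
    obtain j where j: "j + 1 < length xsq" "xsq!j < y" "y < xsq!(j+1)" using frame_gap ym False by blast
    have "xsp!(i+1) \<in> points p q" "xsq!(j+1) \<in> points p q"
      using frames_in_points[OF fp] i(1) j(1) by auto
    then have s_le: "s \<le> xsp!(i+1)" "s \<le> xsq!(j+1)" using s(4) i(3) j(3) by auto
    consider "s < xsp!(i+1)" | "s < xsq!(j+1)" | "xsq!(j+1) = xsp!(i+1)" using s_le by fastforce
    then show ?thesis
    proof cases
      case 1
      then show ?thesis using i s by (intro advance[of S xsp dp i s]) auto
    next
      case 2
      then show ?thesis using j s by (intro advance[of T xsq dq j s]) auto
    next
      case 3
      then have "j = kq" using common_frame_point[OF j(1)] i(1) j(3) ym(1) by auto
      then show ?thesis using j(2) below by simp
    qed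
  qed
qed

lemma climb:
  "ascent p q w e0 y \<Longrightarrow> \<exists>p' q' w' y'. ascent p' q' w' e0 y' \<and> p \<subseteq>\<^sub>m p' \<and> q \<subseteq>\<^sub>m q' \<and> xsq ! kq < y'"
proof (induction "climb_measure p q y" arbitrary: p q w y rule: less_induct)
  case less
  show ?case
  proof (cases "xsq ! kq < y")
    case False
    then obtain p' q' w' y' where step: "ascent p' q' w' e0 y'" "p \<subseteq>\<^sub>m p'" "q \<subseteq>\<^sub>m q'"
      "climb_measure p' q' y' < climb_measure p q y"
      using climb_step[OF less.prems] by blast
    then obtain p'' q'' w'' y'' where "ascent p'' q'' w'' e0 y''" "p' \<subseteq>\<^sub>m p''" "q' \<subseteq>\<^sub>m q''"
      "xsq ! kq < y''"
      using less.hyps[OF step(4,1)] by blast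
    then show ?thesis using step(2,3) map_le_trans by blast
  qed (use less.prems map_le_refl in blast)
qed

lemma last_gap_step:
  assumes a: "ascent p q w e0 y" and y: "xsq ! kq < y"
    and t: "y \<le> t" "t < last xsp" "\<forall>x\<in>points p q. y < x \<longrightarrow> t \<le> x"
  obtains q' y' where "framed q' xsq dq" "q \<subseteq>\<^sub>m q'" "ascent p q' ((T, dq kq) # w) e0 y'"
    "y < y'" "points p q' \<subseteq> points p q \<union> {y, y'}" "y' \<in> points p q \<or> t < y'"
proof -
  have fp: "framed_pair p q" and ev: "word_eval p q w e0 = Some y" and asc: "ascending p q w e0"
    and ym: "hd xsp < y" "y < last xsp" using a unfolding ascent_def by auto
  have G: "(T = S \<and> xsq = xsp \<and> dq = dp) \<or> (T = T \<and> xsq = xsq \<and> dq = dq)" by simp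
  have gap: "kq + 1 < length xsq" "xsq ! kq < y" "y < xsq ! (kq + 1)"
    using last_gap y ym(2) by auto
  obtain p' q' y' where r: "framed_pair p' q'" "p \<subseteq>\<^sub>m p'" "q \<subseteq>\<^sub>m q'" "T = T \<longrightarrow> p' = p"
    "word_eval p' q' ((T, dq kq) # w) e0 = Some y'" "ascending p' q' ((T, dq kq) # w) e0"
    "y < y'" "y' < xsq ! (kq + 1)" "points p' q' \<subseteq> points p q \<union> {y, y'}" "y' \<in> points p q \<or> t < y'"
    by (rule pair_step[OF fp G gap ev asc t(1) _ t(3)]) (use t(2) last_gap(2) in simp)
  have p': "p' = p" using r(4) by simp
  have "ascent p q' ((T, dq kq) # w) e0 y'"
    using r(1,5-8) p' ym last_gap(2) unfolding ascent_def by auto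
  then show ?thesis using r(1,3,7,9,10) p' by (intro that[of q' y']) auto
qed

text \<open>Each step either passes the next point above y, or there is
  no point left between y and M and one last step suffices.\<close>

lemma push:
  assumes "ascent p q w e0 y" "xsq ! kq < y"
  shows "\<exists>q' n y'. framed q' xsq dq \<and> q \<subseteq>\<^sub>m q' \<and> 0 < n \<and>
     ascent p q' (replicate n (T, dq kq) @ w) e0 y' \<and> xsq ! kq < y' \<and>
     (\<forall>x\<in>dom p \<union> ran p. x < last xsp \<longrightarrow> x < y')"
  using assms
proof (induction "card {x \<in> points p q. y < x}" arbitrary: q w y rule: less_induct)
  case less
  have fp: "framed_pair p q" and ym: "y < last xsp" using less.prems(1) unfolding ascent_def by auto
  obtain s where s: "s \<in> points p q" "y < s" "s \<le> last xsp" "\<forall>x\<in>points p q. y < x \<longrightarrow> s \<le> x"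
    using next_point[OF fp ym] .
  let ?l = "(T, dq kq)"
  show ?case
  proof (cases "s < last xsp")
    case True
    obtain q' y' where r: "framed q' xsq dq" "q \<subseteq>\<^sub>m q'" "ascent p q' (?l # w) e0 y'"
      "y < y'" "points p q' \<subseteq> points p q \<union> {y, y'}" "y' \<in> points p q \<or> s < y'"
      by (rule last_gap_step[OF less.prems _ True s(4)]) (use s(2) in simp)
    have "s \<le> y'" using r(4,6) s(4) by auto
    then have "card {x \<in> points p q'. y' < x} < card {x \<in> points p q. y < x}"
      using card_points_above(2)[OF _ r(5,4) s(1,2)] fp finite_points framed_partial_iso by blast
    then obtain q'' n y'' where "framed q'' xsq dq" "q' \<subseteq>\<^sub>m q''" "0 < n"
      "ascent p q'' (replicate n ?l @ ?l # w) e0 y''" "xsq ! kq < y''"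
      "\<forall>x\<in>dom p \<union> ran p. x < last xsp \<longrightarrow> x < y''"
      using less.hyps r(3,4) less.prems(2) by fastforce
    then show ?thesis using map_le_trans[OF r(2)]
      by (intro exI[of _ q''] exI[of _ "Suc n"] exI[of _ y'']) (auto simp: replicate_app_Cons_same)
  next
    case False
    then have no_point: "\<forall>x\<in>points p q. x < last xsp \<longrightarrow> x \<le> y" using s(3,4) by force
    obtain q' y' where r: "framed q' xsq dq" "q \<subseteq>\<^sub>m q'" "ascent p q' (?l # w) e0 y'"
      "y < y'" "points p q' \<subseteq> points p q \<union> {y, y'}" "y' \<in> points p q \<or> y < y'"
      by (rule last_gap_step[OF less.prems order.refl ym]) auto
    have "\<forall>x\<in>dom p \<union> ran p. x < last xsp \<longrightarrow> x < y'"
      using no_point r(4) unfolding points_def by fastforce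
    then show ?thesis using r less.prems(2)
      by (intro exI[of _ q'] exI[of _ "1::nat"] exI[of _ y']) auto
  qed
qed

lemma reach_last_gap:
  assumes fp: "framed_pair p q" and E: "finite E" "E \<subseteq> {hd xsp<..<last xsp}" and e0: "e0 \<in> E"
  obtains p' q' v y where "ascent p' q' v e0 y" "p \<subseteq>\<^sub>m p'" "q \<subseteq>\<^sub>m q'" "xsq ! kq < y"
    "\<forall>c\<in>E. word_eval p' q' v c \<noteq> None"
proof -
  have "ascent p q [] e0 e0" using fp e0 E(2) unfolding ascent_def by auto
  then obtain p1 q1 v y where climbed: "ascent p1 q1 v e0 y" "p \<subseteq>\<^sub>m p1" "q \<subseteq>\<^sub>m q1" "xsq ! kq < y"
    using climb by blast
  obtain p2 q2 where defined: "framed_pair p2 q2" "p1 \<subseteq>\<^sub>m p2" "q1 \<subseteq>\<^sub>m q2"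
    "\<forall>c\<in>E. word_eval p2 q2 v c \<noteq> None"
    using extend_to_define[OF E, of p1 q1 "[]" v] climbed(1) unfolding ascent_def by auto
  have "ascent p2 q2 v e0 y" using climbed(1) defined(1-3) framed_pair_ext unfolding ascent_def by blast
  then show ?thesis using that climbed(2-4) defined(2-4) map_le_trans by blast
qed

lemma push_and_define:
  assumes a: "ascent p q v e0 y" "xsq ! kq < y"
    and E: "finite E" "E \<subseteq> {hd xsp<..<last xsp}" and defined: "\<forall>c\<in>E. word_eval p q v c \<noteq> None"
  obtains q' n y' where "framed q' xsq dq" "q \<subseteq>\<^sub>m q'" "0 < n"
    "ascent p q' (replicate n (T, dq kq) @ v) e0 y'" "xsq ! kq < y'"
    "\<forall>x\<in>dom p \<union> ran p. x < last xsp \<longrightarrow> x < y'"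
    "\<forall>c\<in>E. word_eval p q' (replicate n (T, dq kq) @ v) c \<noteq> None"
proof -
  have fp: "framed_pair p q" using a(1) unfolding ascent_def by simp
  obtain q1 n y' where pushed: "framed q1 xsq dq" "q \<subseteq>\<^sub>m q1" "0 < n"
    "ascent p q1 (replicate n (T, dq kq) @ v) e0 y'" "xsq ! kq < y'"
    "\<forall>x\<in>dom p \<union> ran p. x < last xsp \<longrightarrow> x < y'"
    using push[OF a] by blast
  have "\<forall>c\<in>E. word_eval p q1 v c \<noteq> None"
    using defined framed_pair_ext(1)[OF fp _ map_le_refl pushed(2)] fp pushed(1) by fastforce
  then obtain q2 where extended: "framed q2 xsq dq" "q1 \<subseteq>\<^sub>m q2"
    "\<forall>c\<in>E. word_eval p q2 (replicate n (T, dq kq) @ v) c \<noteq> None"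
    using extend_to_define[OF E, of p q1 v "replicate n (T, dq kq)"] fp pushed(1) by fastforce
  have "ascent p q2 (replicate n (T, dq kq) @ v) e0 y'"
    using pushed(4) framed_pair_ext[OF _ _ map_le_refl extended(2)] fp pushed(1) extended(1)
    unfolding ascent_def by auto
  then show ?thesis using that pushed(3,5,6) extended(1,3) map_le_trans[OF pushed(2) extended(2)] by blast
qed

text \<open>The core construction: a reduced word W = t^n v (n \<noteq> 0) carrying the finite set E into
  the last gap (xsq!kq, M) of q, which is increasing or decreasing according to the sign of
  the leading power, and carrying Min E beyond all essential points of p. Climbing may extend
  p, but pushing extends q only, so the essential points of p are fixed before pushing.\<close>

lemma escape:
  assumes fp: "framed_pair p q" and E: "finite E" "E \<noteq> {}" "E \<subseteq> {hd xsp<..<last xsp}"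
  obtains p' q' W where "framed_pair p' q'" "p \<subseteq>\<^sub>m p'" "q \<subseteq>\<^sub>m q'"
    "W \<noteq> []" "fst (hd W) = T" "reduced W"
    "\<forall>c\<in>E. word_eval p' q' W c \<noteq> None \<and> the (word_eval p' q' W c) \<in> {xsq ! kq<..<last xsp}"
    "if snd (hd W) then increasing_interval q' (xsq ! kq) (last xsp)
     else decreasing_interval q' (xsq ! kq) (last xsp)"
    "\<forall>e\<in>Ess p'. e < the (word_eval p' q' W (Min E))"
proof -
  define e0 where "e0 = Min E"
  have e0: "e0 \<in> E" "\<forall>c\<in>E. e0 \<le> c" using E unfolding e0_def by auto
  obtain p2 q2 v y2 where climbed: "ascent p2 q2 v e0 y2" "p \<subseteq>\<^sub>m p2" "q \<subseteq>\<^sub>m q2" "xsq ! kq < y2"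
    "\<forall>c\<in>E. word_eval p2 q2 v c \<noteq> None"
    using reach_last_gap[OF fp E(1,3) e0(1)] .
  obtain q3 n y3 where pushed: "framed q3 xsq dq" "q2 \<subseteq>\<^sub>m q3" "0 < n"
    "ascent p2 q3 (replicate n (T, dq kq) @ v) e0 y3" "xsq ! kq < y3"
    "\<forall>x\<in>dom p2 \<union> ran p2. x < last xsp \<longrightarrow> x < y3"
    "\<forall>c\<in>E. word_eval p2 q3 (replicate n (T, dq kq) @ v) c \<noteq> None"
    using push_and_define[OF climbed(1,4) E(1,3) climbed(5)] .
  define W where "W = replicate n (T, dq kq) @ v"
  have fp3: "framed_pair p2 q3" and ev: "word_eval p2 q3 W e0 = Some y3"
    and asc: "ascending p2 q3 W e0" using pushed(4) unfolding W_def ascent_def by auto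
  have images: "the (word_eval p2 q3 W c) \<in> {xsq ! kq<..<last xsp}" if c: "c \<in> E" for c
  proof -
    obtain y where y: "word_eval p2 q3 W c = Some y" using pushed(7) c unfolding W_def by auto
    have "y3 \<le> y"
      using word_eval_less[OF framed_partial_iso framed_partial_iso ev y] fp3 e0(2) c ev y
      by (cases "c = e0") force+
    moreover have "y < last xsp" using word_open[OF fp3 y] c E(3) by auto
    ultimately show ?thesis using y pushed(5) by auto
  qed
  have bound: "e < y3" if "e \<in> Ess p2" for e
  proof -
    have "e \<in> dom p2 \<union> ran p2" "e < last xsp"
      using that Ess_framed[OF conjunct1[OF fp3]] unfolding Ess_def by auto
    then show ?thesis using pushed(6) by blast
  qed
  have hd_W: "W \<noteq> [] \<and> hd W = (T, dq kq)" using pushed(3) unfolding W_def by (cases n) auto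
  then have "snd (hd W) = dq kq" by simp
  then have "if snd (hd W) then increasing_interval q3 (xsq ! kq) (last xsp)
     else decreasing_interval q3 (xsq ! kq) (last xsp)"
    using framed_gap[OF pushed(1) last_gap(1)] unfolding last_gap(2) by (simp only:)
  moreover have "reduced W" using ascending_reduced[OF _ _ asc] fp3 framed_partial_iso by blast
  moreover have "q \<subseteq>\<^sub>m q3" using climbed(3) pushed(2) map_le_trans by blast
  ultimately show ?thesis
    using that[of p2 q3 W] fp3 climbed(2) hd_W images pushed(7) bound ev unfolding e0_def W_def by auto
qed

end

section \<open>Liberation\<close>

lemma elementary_pair_frames:
  assumes "elementary_pair p q"
  obtains xsp dp xsq dq where "framed p xsp dp" "framed q xsq dq"
    "hd xsp = Min (dom p)" "last xsp = Max (dom p)" "hd xsq = hd xsp" "last xsq = last xsp"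
    "set xsp \<inter> set xsq \<subseteq> {hd xsp, last xsp}"
proof -
  have pi: "partial_iso p" "partial_iso q" and inf: "informative p" "informative q"
    and ends: "Min (dom p) = Min (dom q)" "Max (dom p) = Max (dom q)"
    and common_fix: "Fix p \<inter> Fix q = {Min (dom p), Max (dom p)}"
    using assms unfolding elementary_pair_def by auto
  obtain xsp dp xsq dq where gp: "framed p xsp dp" "hd xsp = Min (dom p)" "last xsp = Max (dom p)"
    and gq: "framed q xsq dq" "hd xsq = Min (dom q)" "last xsq = Max (dom q)"
    using informative_framed[OF inf(1) pi(1)] informative_framed[OF inf(2) pi(2)] by blast
  have "x \<in> Fix p \<inter> Fix q" if "x \<in> set xsp \<inter> set xsq" for x
    using that framed_fix[OF gp(1)] framed_fix[OF gq(1)] unfolding Fix_def by auto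
  then have "set xsp \<inter> set xsq \<subseteq> {hd xsp, last xsp}" using common_fix gp(2,3) by force
  then show ?thesis using that gp gq ends by simp
qed

text \<open>If there are no essential points, a single letter t liberates p, with the empty
  interval (M, M).\<close>

lemma liberates_p_no_essential_points:
  assumes "elementary_pair p q" "Ess p \<union> Ess q = {}"
  shows "liberates_p p q p q [(T, True)]"
proof -
  have "q (Max (dom q)) = Some (Max (dom q))" using assms(1) unfolding elementary_pair_def informative_def by auto
  then have "increasing_interval q (Max (dom q)) (Max (dom q))" unfolding increasing_interval_def by auto
  then show ?thesis using assms unfolding liberates_p_def elementary_pair_def
    by (auto simp: reduced_def intro!: exI[of _ "Max (dom q)"])
qed

theorem liberation_p:
  assumes ep: "elementary_pair p q"
  shows "\<exists>p' q' w. liberates_p p q p' q' w"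
proof (cases "Ess p \<union> Ess q = {}")
  case True
  then show ?thesis using liberates_p_no_essential_points[OF ep] by blast
next
  case False
  obtain xsp dp xsq dq where gp: "framed p xsp dp" and gq: "framed q xsq dq"
    and ends: "hd xsp = Min (dom p)" "last xsp = Max (dom p)" "hd xsq = hd xsp" "last xsq = last xsp"
    and meet: "set xsp \<inter> set xsq \<subseteq> {hd xsp, last xsp}"
    using elementary_pair_frames[OF ep] by blast
  define E where "E = Ess p \<union> Ess q"
  have E_open: "E \<subseteq> {hd xsp<..<last xsp}" using Ess_framed[OF gp] Ess_framed[OF gq] ends(3,4)
    unfolding E_def by auto
  have E_finite: "finite E" using gp gq framed_partial_iso finite_ran_partial_iso
    unfolding E_def Ess_def partial_iso_def by blast
  interpret two_frames xsp dp xsq dq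
    using gp gq ends meet E_open False unfolding E_def framed_def by unfold_locales auto
  obtain p' q' W where W: "framed_pair p' q'" "p \<subseteq>\<^sub>m p'" "q \<subseteq>\<^sub>m q'"
    "W \<noteq> []" "fst (hd W) = T" "reduced W"
    "\<forall>c\<in>E. word_eval p' q' W c \<noteq> None \<and> the (word_eval p' q' W c) \<in> {xsq ! kq<..<last xsp}"
    "if snd (hd W) then increasing_interval q' (xsq ! kq) (last xsp)
     else decreasing_interval q' (xsq ! kq) (last xsp)"
    "\<forall>e\<in>Ess p'. e < the (word_eval p' q' W (Min E))"
    by (rule escape[OF conjI[OF gp gq] E_finite _ E_open]) (use False E_def in auto)
  have "Min (dom p') = Min (dom p)" "Max (dom p') = Max (dom p)"
    "Min (dom q') = Min (dom q)" "Max (dom q') = Max (dom q)"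
    using framed_Min framed_Max W(1) gp gq by metis+
  then have "liberates_p p q p' q' W"
    using W framed_partial_iso framed_informative ends(2,4) framed_Max[OF gq]
    unfolding liberates_p_def E_def by (intro conjI exI[of _ "xsq ! kq"]) auto
  then show ?thesis by blast
qed

text \<open>Exchanging the letters s and t turns words for (p, q) into words for (q, p); hence
  liberating q in (p, q) amounts to liberating the first map of the elementary pair (q, p).\<close>

fun swap_gen :: "gen \<Rightarrow> gen" where "swap_gen S = T" | "swap_gen T = S"

definition swap_word :: "word \<Rightarrow> word" where
  "swap_word w = map (\<lambda>(g, b). (swap_gen g, b)) w"

lemma act_swap: "act q p (swap_gen (fst l), snd l) = act p q l"
  by (cases l, rename_tac G b, case_tac G; case_tac b) auto

lemma word_eval_swap: "word_eval q p (swap_word w) c = word_eval p q w c"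
proof (induction w)
  case (Cons l w)
  have "swap_word (l # w) = (swap_gen (fst l), snd l) # swap_word w"
    unfolding swap_word_def by (cases l) auto
  then show ?case using Cons act_swap[of q p l] by (simp split: option.splits)
qed (simp add: swap_word_def)

lemma swap_gen_eq_iff: "swap_gen a = swap_gen b \<longleftrightarrow> a = b"
  by (cases a; cases b) auto

lemma reduced_swap: "reduced (swap_word w) = reduced w"
  unfolding reduced_def swap_word_def by (auto simp: case_prod_beta swap_gen_eq_iff)

lemma hd_swap: "w \<noteq> [] \<Longrightarrow> hd (swap_word w) = (swap_gen (fst (hd w)), snd (hd w))"
  unfolding swap_word_def by (cases w) auto

lemma swap_word_Nil_iff: "swap_word w = [] \<longleftrightarrow> w = []"
  unfolding swap_word_def by simp

theorem liberation_q:
  assumes ep: "elementary_pair p q"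
  shows "\<exists>p' q' w. liberates_q p q p' q' w"
proof -
  have "elementary_pair q p" using ep unfolding elementary_pair_def by (auto simp: Int_commute)
  then obtain q' p' w where l: "liberates_p q p q' p' w" using liberation_p by blast
  then have "liberates_q p q p' q' (swap_word w)" unfolding liberates_p_def liberates_q_def
    by (simp add: word_eval_swap reduced_swap hd_swap swap_word_Nil_iff Un_commute)
  then show ?thesis by blast
qed

theorem lemma3p6:
  assumes "elementary_pair p q"
  shows "(\<exists>p' q' w. liberates_p p q p' q' w) \<and> (\<exists>p' q' w. liberates_q p q p' q' w)"
  using liberation_p[OF assms] liberation_q[OF assms] by blast

end
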